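(* The factor complexities $\mathsf{p}_{\mathbf{t}_{3/2}}$ and $\mathsf{p}_{\Delta(\mathbf{t}_{3/2})}$ are both in $\Theta(n^r)$ with $r=\frac{\log 3}{\log(3/2)}$; that is, for each of these two functions $\mathsf{p}$ there exist constants $C_1,C_2>0$ with $C_1n^r\le\mathsf{p}(n)\le C_2n^r$ for all $n\ge1$.
   Context: The Thue--Morse word in base $3/2$ is the unique binary sequence $\mathbf{t}_{3/2}=(t_n)_{n\ge0}$ with $t_0=0$, $t_{3n}=t_{3n+1}=t_{2n}$ and $t_{3n+2}=1-t_{2n+1}$ for all $n\ge0$ (equivalently, $t_n$ is the digit sum modulo $2$ of the base-$3/2$ expansion of $n$, where $\langle 0\rangle$ is empty and $\langle n\rangle=\langle m\rangle d$ for $2n=3m+d$, $d\in\{0,1,2\}$). For a binary sequence $\mathbf{x}=(x_n)$, $\Delta(\mathbf{x})=(x_{n+1}-x_n\bmod 2)_{n\ge0}$, and $\mathsf{p}_{\mathbf{x}}(n)$ is the number of distinct length-$n$ factors of $\mathbf{x}$. *)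

theory Defs
  imports Complex_Main
begin

function base32 :: "nat \<Rightarrow> nat list" where
  "base32 n = (if n = 0 then [] else base32 (2 * n div 3) @ [2 * n mod 3])"
  by pat_completeness auto
termination
  by (relation "measure id") auto

definition tm32 :: "nat \<Rightarrow> nat" where
  "tm32 n = sum_list (base32 n) mod 2"

text \<open>Difference sequence of a binary sequence (values in {0,1}):
  (x(n+1) - x(n)) mod 2, computed as (x(n+1) + x(n)) mod 2.\<close>
definition Delta :: "(nat \<Rightarrow> nat) \<Rightarrow> nat \<Rightarrow> nat" where
  "Delta x n = (x (Suc n) + x n) mod 2"

definition factors :: "(nat \<Rightarrow> 'a) \<Rightarrow> nat \<Rightarrow> 'a list set" where
  "factors x n = {map (\<lambda>j. x (i + j)) [0..<n] | i. True}"

definition fcomplexity :: "(nat \<Rightarrow> 'a) \<Rightarrow> nat \<Rightarrow> nat" where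
  "fcomplexity x n = card (factors x n)"

end

theory Submission
  imports Defs "HOL-Number_Theory.Cong"
begin

text \<open>Both bounds rest on the self-similarity \<open>t(n) = t(\<lfloor>2n/3\<rfloor>) + (2n mod 3) (mod 2)\<close>.

  Upper bound: the factor of length \<open>n\<close> at position \<open>i\<close> is determined by \<open>i mod 3\<close> and the
  factor of length \<open>\<lfloor>(2n+5)/3\<rfloor>\<close> at position \<open>2\<lfloor>i/3\<rfloor>\<close>, so \<open>p(n) \<le> 3 p(\<lfloor>(2n+5)/3\<rfloor>)\<close>
  and \<open>p(n) = O(3^j)\<close> for \<open>n \<le> (3/2)^j\<close>.

  Lower bound: \<open>\<Delta>t\<close> vanishes at multiples of 3 and equals 1 at positions \<open>\<equiv> 1, 5 (mod 9)\<close>, so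
  a factor of \<open>\<Delta>t\<close> of length at least 9 determines its position modulo 3. Moreover
  \<open>\<Delta>t(\<lfloor>(3y+2)/2\<rfloor>) = 1 - \<Delta>t(y)\<close>, so equal factors of length \<open>n\<close> at positions \<open>i \<equiv> i' (mod 3)\<close>
  give equal factors of length about \<open>2n/3\<close> at \<open>\<lfloor>2i/3\<rfloor>\<close> and \<open>\<lfloor>2i'/3\<rfloor>\<close>. Iterating, a factor
  of length about \<open>10 (3/2)^j\<close> determines its position modulo \<open>3^j\<close>, so there are at least \<open>3^j\<close>
  such factors. Since \<open>(3/2)^r = 3\<close>, both bounds are of order \<open>n^r\<close>.\<close>

section \<open>Factors and factor complexity\<close>

definition window :: "(nat \<Rightarrow> 'a) \<Rightarrow> nat \<Rightarrow> nat \<Rightarrow> 'a list" where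
  "window x i n = map (\<lambda>j. x (i + j)) [0..<n]"

lemma factors_eq_range_window: "factors x n = range (\<lambda>i. window x i n)"
  unfolding factors_def window_def by auto

lemma window_eq_iff: "window x i n = window x i' n \<longleftrightarrow> (\<forall>u<n. x (i + u) = x (i' + u))"
  unfolding window_def by (auto simp: map_eq_conv)

lemma factors_subset_lists: "factors x n \<subseteq> {w. set w \<subseteq> range x \<and> length w = n}"
  unfolding factors_eq_range_window window_def by auto

lemma finite_factors: "finite (range x) \<Longrightarrow> finite (factors x n)"
  using factors_subset_lists finite_lists_length_eq by (rule finite_subset)

lemma fcomplexity_le_card_range_power:
  assumes "finite (range x)"
  shows "fcomplexity x n \<le> card (range x) ^ n"
proof -
  have "fcomplexity x n \<le> card {w. set w \<subseteq> range x \<and> length w = n}"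
    unfolding fcomplexity_def using assms factors_subset_lists
    by (intro card_mono) (simp_all add: finite_lists_length_eq)
  then show ?thesis
    using assms by (simp add: card_lists_length_eq)
qed

lemma fcomplexity_pos:
  assumes "finite (range x)"
  shows "0 < fcomplexity x n"
proof -
  have "window x 0 n \<in> factors x n"
    by (simp add: factors_eq_range_window)
  then show ?thesis
    unfolding fcomplexity_def using finite_factors[OF assms] card_gt_0_iff by blast
qed

lemma le_fcomplexity_if_window_eq_imp_cong:
  assumes "finite (range x)"
    and "\<And>i i'. window x i n = window x i' n \<Longrightarrow> [i = i'] (mod M)"
  shows "M \<le> fcomplexity x n"
proof -
  have "inj_on (\<lambda>i. window x i n) {..<M}"
    using assms(2) by (intro inj_onI) (fastforce simp: cong_def)
  moreover have "(\<lambda>i. window x i n) ` {..<M} \<subseteq> factors x n"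
    by (auto simp: factors_eq_range_window)
  ultimately have "card {..<M} \<le> card (factors x n)"
    using finite_factors[OF assms(1)] by (rule card_inj_on_le)
  then show ?thesis
    by (simp add: fcomplexity_def)
qed

lemma window_Delta:
  "window (Delta x) i n = map (\<lambda>j. (window x i (Suc n) ! Suc j + window x i (Suc n) ! j) mod 2) [0..<n]"
  unfolding window_def Delta_def by (simp del: upt_Suc add: nth_append)

lemma window_Delta_eq:
  "window x i (Suc n) = window x i' (Suc n) \<Longrightarrow> window (Delta x) i n = window (Delta x) i' n"
  by (metis window_Delta)

lemma fcomplexity_Delta_le:
  assumes "finite (range x)"
  shows "fcomplexity (Delta x) n \<le> fcomplexity x (Suc n)"
proof -
  let ?f = "\<lambda>w. map (\<lambda>j. (w ! Suc j + w ! j) mod 2) [0..<n]"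
  have "factors (Delta x) n = ?f ` factors x (Suc n)"
    unfolding factors_eq_range_window window_Delta by (simp add: image_image)
  then show ?thesis
    unfolding fcomplexity_def by (simp add: card_image_le finite_factors[OF assms])
qed

lemma Delta_less_2: "Delta x n < 2"
  by (simp add: Delta_def)

lemma finite_range_Delta: "finite (range (Delta x))"
  by (rule finite_subset[of _ "{..<2}"]) (auto simp: Delta_less_2)

section \<open>Polynomial growth from geometric scaling\<close>

lemma power_powr_log:
  fixes \<beta> \<gamma> :: real
  assumes "1 < \<beta>" and "0 < \<gamma>"
  shows "(\<beta> ^ j) powr log \<beta> \<gamma> = \<gamma> ^ j"
proof -
  have "(\<beta> ^ j) powr log \<beta> \<gamma> = (\<beta> powr log \<beta> \<gamma>) powr real j"
    using assms(1) by (simp add: powr_realpow[symmetric] powr_powr mult.commute)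
  also have "\<dots> = \<gamma> ^ j"
    using assms by (simp add: powr_realpow)
  finally show ?thesis .
qed

lemma ex_least_power_gt:
  fixes \<beta> x :: real
  assumes "1 < \<beta>"
  obtains J where "x < \<beta> ^ J" and "\<And>j. j < J \<Longrightarrow> \<beta> ^ j \<le> x"
proof -
  define J where "J = (LEAST J. x < \<beta> ^ J)"
  have "\<exists>J. x < \<beta> ^ J"
    using assms by (rule real_arch_pow)
  then have "x < \<beta> ^ J"
    unfolding J_def by (rule LeastI_ex)
  moreover have "\<beta> ^ j \<le> x" if "j < J" for j
    using not_less_Least[OF that[unfolded J_def]] by simp
  ultimately show ?thesis
    by (rule that)
qed

lemma powr_lower_bound_if_scaling:
  fixes f :: "nat \<Rightarrow> real" and \<beta> \<gamma> c :: real
  assumes "1 < \<beta>" "1 \<le> \<gamma>" "0 < c"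
    and pos: "\<And>n. 1 \<le> n \<Longrightarrow> 1 \<le> f n"
    and scale: "\<And>j n. c * \<beta> ^ j \<le> real n \<Longrightarrow> \<gamma> ^ j \<le> f n"
  shows "\<exists>C>0. \<forall>n\<ge>1. C * real n powr log \<beta> \<gamma> \<le> f n"
proof -
  define r where "r = log \<beta> \<gamma>"
  define K where "K = c powr r * \<gamma>"
  have "0 \<le> r"
    unfolding r_def using assms(1,2) by simp
  have "0 < K"
    unfolding K_def using assms(2,3) by simp
  have "real n powr r \<le> K * f n" if "1 \<le> n" for n
  proof -
    obtain J where J: "real n / c < \<beta> ^ J" "\<And>j. j < J \<Longrightarrow> \<beta> ^ j \<le> real n / c"
      using ex_least_power_gt[OF assms(1)] by blast
    have growth: "\<gamma> ^ J \<le> \<gamma> * f n"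
    proof (cases J)
      case 0
      then show ?thesis
        using mult_mono[of 1 \<gamma> 1 "f n"] pos[OF that] assms(2) by simp
    next
      case (Suc j)
      then have "c * \<beta> ^ j \<le> real n"
        using J(2)[of j] assms(3) by (simp add: field_simps)
      then show ?thesis
        using Suc scale assms(2) by (simp add: mult_left_mono)
    qed
    have "real n powr r \<le> (c * \<beta> ^ J) powr r"
      using J(1) assms(3) \<open>0 \<le> r\<close> by (intro powr_mono2) (simp_all add: field_simps)
    also have "\<dots> = c powr r * \<gamma> ^ J"
      unfolding r_def using assms by (simp add: powr_mult power_powr_log)
    also have "\<dots> \<le> c powr r * (\<gamma> * f n)"
      using growth by (rule mult_left_mono) simp
    finally show ?thesis
      unfolding K_def by (simp add: mult.assoc)
  qed
  then show ?thesis
    using \<open>0 < K\<close> by (intro exI[of _ "1 / K"]) (simp add: field_simps r_def)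
qed

lemma powr_upper_bound_if_scaling:
  fixes f :: "nat \<Rightarrow> real" and \<beta> \<gamma> d :: real
  assumes "1 < \<beta>" "1 \<le> \<gamma>" "0 < d"
    and scale: "\<And>j n. real n \<le> \<beta> ^ j \<Longrightarrow> f n \<le> d * \<gamma> ^ j"
  shows "\<exists>C>0. \<forall>n\<ge>1. f n \<le> C * real n powr log \<beta> \<gamma>"
proof -
  define r where "r = log \<beta> \<gamma>"
  have "0 \<le> r"
    unfolding r_def using assms(1,2) by simp
  have "f n \<le> (d * \<gamma>) * real n powr r" if "1 \<le> n" for n
  proof -
    obtain J where J: "real n < \<beta> ^ J" "\<And>j. j < J \<Longrightarrow> \<beta> ^ j \<le> real n"
      using ex_least_power_gt[OF assms(1)] by blast
    have "\<gamma> ^ J \<le> \<gamma> * real n powr r"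
    proof (cases J)
      case 0
      have "1 \<le> real n powr r"
        using that \<open>0 \<le> r\<close> by (simp add: ge_one_powr_ge_zero)
      then show ?thesis
        using 0 mult_mono[of 1 \<gamma> 1 "real n powr r"] assms(2) by simp
    next
      case (Suc j)
      have "\<gamma> ^ j = (\<beta> ^ j) powr r"
        unfolding r_def using assms(1,2) by (simp add: power_powr_log)
      also have "\<dots> \<le> real n powr r"
        using J(2)[of j] Suc \<open>0 \<le> r\<close> assms(1) by (intro powr_mono2) simp_all
      finally show ?thesis
        using Suc assms(2) by (simp add: mult_left_mono)
    qed
    then have "d * \<gamma> ^ J \<le> d * (\<gamma> * real n powr r)"
      using assms(3) by (simp add: mult_left_mono)
    then show ?thesis
      using scale[of n J] J(1) by (simp add: mult.assoc)
  qed
  then show ?thesis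
    using assms(2,3) unfolding r_def by (intro exI[of _ "d * \<gamma>"]) simp
qed

lemma Theta_powr_log_three_halves:
  fixes f :: "nat \<Rightarrow> nat" and c d :: nat
  assumes "0 < c" "0 < d"
    and pos: "\<And>n. 1 \<le> n \<Longrightarrow> 1 \<le> f n"
    and lower: "\<And>j n. c * 3 ^ j \<le> 2 ^ j * n \<Longrightarrow> 3 ^ j \<le> f n"
    and upper: "\<And>j n. 2 ^ j * n \<le> 3 ^ j \<Longrightarrow> f n \<le> d * 3 ^ j"
  shows "\<exists>C1 C2. C1 > 0 \<and> C2 > 0 \<and> (\<forall>n\<ge>1.
           C1 * real n powr log (3/2) 3 \<le> real (f n) \<and> real (f n) \<le> C2 * real n powr log (3/2) 3)"
proof -
  have three_halves_pow: "(3/2 :: real) ^ j = 3 ^ j / 2 ^ j" for j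
    by (simp add: power_divide)
  have "\<exists>C>0. \<forall>n\<ge>1. C * real n powr log (3/2) 3 \<le> real (f n)"
  proof (rule powr_lower_bound_if_scaling)
    fix j n
    assume "real c * (3/2) ^ j \<le> real n"
    then have "real (c * 3 ^ j) \<le> real (2 ^ j * n)"
      unfolding three_halves_pow by (simp add: field_simps)
    then show "3 ^ j \<le> real (f n)"
      using lower of_nat_le_iff by (metis of_nat_numeral of_nat_power)
  qed (use assms pos in simp_all)
  moreover have "\<exists>C>0. \<forall>n\<ge>1. real (f n) \<le> C * real n powr log (3/2) 3"
  proof (rule powr_upper_bound_if_scaling)
    fix j n
    assume "real n \<le> (3/2) ^ j"
    then have "real (2 ^ j * n) \<le> real (3 ^ j)"
      unfolding three_halves_pow by (simp add: field_simps)
    then show "real (f n) \<le> real d * 3 ^ j"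
      using upper of_nat_le_iff by (metis of_nat_mult of_nat_numeral of_nat_power)
  qed (use assms in simp_all)
  ultimately show ?thesis
    by blast
qed

section \<open>Recurrences for the Thue--Morse word in base 3/2\<close>

declare base32.simps [simp del]

lemma tm32_rec: "tm32 n = (tm32 (2 * n div 3) + 2 * n mod 3) mod 2"
proof (cases "n = 0")
  case False
  then have "base32 n = base32 (2 * n div 3) @ [2 * n mod 3]"
    by (subst base32.simps) simp
  then show ?thesis
    by (simp add: tm32_def mod_add_left_eq)
qed (simp add: tm32_def base32.simps)

lemma tm32_less_2: "tm32 n < 2"
  by (simp add: tm32_def)

lemma Delta_tm32_mult_3: "Delta tm32 (3 * k) = 0"
proof -
  have "2 * (3 * k) div 3 = 2 * k" "2 * (3 * k) mod 3 = 0"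
    and "2 * (3 * k + 1) div 3 = 2 * k" "2 * (3 * k + 1) mod 3 = 2"
    by presburger+
  then have "tm32 (3 * k + 1) = tm32 (3 * k)"
    using tm32_rec[of "3 * k"] tm32_rec[of "3 * k + 1"] by simp
  then show ?thesis
    by (simp add: Delta_def)
qed

lemma Delta_tm32_lift: "Delta tm32 ((3 * y + 2) div 2) = 1 - Delta tm32 y"
proof -
  have flip: "((b + q) mod 2 + (a + p) mod 2) mod 2 = ((b + a) mod 2 + 1) mod 2"
    if "odd (q + p)" for a b p q :: nat
  proof -
    have "((b + q) mod 2 + (a + p) mod 2) mod 2 = ((b + a) + (q + p)) mod 2"
      by (simp add: mod_add_eq add_ac)
    with that show ?thesis
      by (auto elim!: oddE simp: mod_add_left_eq mod_Suc_eq add.assoc[symmetric])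
  qed
  define z where "z = (3 * y + 2) div 2"
  have "2 * z div 3 = y" "2 * Suc z div 3 = Suc y" and "odd (2 * Suc z mod 3 + 2 * z mod 3)"
    unfolding z_def by presburger+
  then have "Delta tm32 z = (Delta tm32 y + 1) mod 2"
    unfolding Delta_def tm32_rec[of z] tm32_rec[of "Suc z"] by (simp add: flip)
  also have "\<dots> = 1 - Delta tm32 y"
    using Delta_less_2[of tm32 y] by (cases "Delta tm32 y") auto
  finally show ?thesis
    unfolding z_def .
qed

lemma Delta_tm32_eq_1:
  assumes "k mod 9 = 1 \<or> k mod 9 = 5"
  shows "Delta tm32 k = 1"
proof -
  have "\<exists>w. k = (3 * (3 * w) + 2) div 2"
    using assms by presburger
  then obtain w where "k = (3 * (3 * w) + 2) div 2" ..
  then show ?thesis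
    using Delta_tm32_lift[of "3 * w"] Delta_tm32_mult_3[of w] by simp
qed

lemma finite_range_tm32: "finite (range tm32)"
  and card_range_tm32: "card (range tm32) \<le> 2"
proof -
  have sub: "range tm32 \<subseteq> {..<2}"
    using tm32_less_2 by auto
  show "finite (range tm32)"
    using finite_subset[OF sub] by simp
  show "card (range tm32) \<le> 2"
    using card_mono[OF _ sub] by simp
qed

section \<open>Lower bound\<close>

lemma double_div_3: "2 * k div 3 = 2 * (k div 3) + 2 * (k mod 3) div (3::nat)"
proof -
  have "2 * k = 2 * (k mod 3) + 3 * (2 * (k div 3))"
    using div_mult_mod_eq[of k 3] by linarith
  then show ?thesis
    by (metis add.commute div_mult_self2 zero_neq_numeral)
qed

text \<open>The map \<open>y \<mapsto> \<lfloor>(3y+2)/2\<rfloor>\<close> of \<open>Delta_tm32_lift\<close> undoes \<open>i \<mapsto> \<lfloor>2i/3\<rfloor>\<close> up to an offset that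
  depends only on \<open>i mod 3\<close> and \<open>u\<close>.\<close>

lemma lift_two_thirds_offset:
  fixes i u :: nat
  shows "(3 * (2 * i div 3 + u) + 2) div 2 = i + ((3 * (2 * (i mod 3) div 3 + u) + 2) div 2 - i mod 3)"
proof -
  define k s where "k = i div 3" and "s = i mod 3"
  have i: "i = 3 * k + s" and "s < 3"
    unfolding k_def s_def by simp_all
  then have "s = 0 \<or> s = 1 \<or> s = 2"
    by linarith
  then have "s \<le> (3 * (2 * s div 3 + u) + 2) div 2"
    by (elim disjE) simp_all
  moreover have "(3 * (2 * k + w) + 2) div 2 = 3 * k + (3 * w + 2) div 2" for w
    by simp
  ultimately show ?thesis
    unfolding double_div_3[of i] k_def[symmetric] s_def[symmetric] by (simp add: i add.assoc)
qed

lemma lift_two_thirds_offset_less: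
  fixes s u m n :: nat
  assumes "s < 3" "u < m" "3 * m + 3 \<le> 2 * n"
  shows "(3 * (2 * s div 3 + u) + 2) div 2 - s < n"
proof -
  have "2 * s div 3 \<le> 1"
    using assms(1) by simp
  then have "(3 * (2 * s div 3 + u) + 2) div 2 \<le> (3 * u + 5) div 2"
    by (intro div_le_mono) simp
  also have "\<dots> < n"
    using assms(2,3) by (simp add: div_less_iff_less_mult)
  finally show ?thesis
    by linarith
qed

lemma cong_pow3_SucI:
  fixes i i' j :: nat
  assumes "[i = i'] (mod 3)" and "[2 * i div 3 = 2 * i' div 3] (mod 3 ^ j)"
  shows "[i = i'] (mod 3 ^ Suc j)"
proof -
  have "i mod 3 = i' mod 3"
    using assms(1) by (simp add: cong_def)
  then have "[2 * (i div 3) = 2 * (i' div 3)] (mod 3 ^ j)"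
    using assms(2) cong_add_rcancel_nat by (metis double_div_3)
  then have "[i div 3 = i' div 3] (mod 3 ^ j)"
    by (simp add: cong_mult_lcancel_nat coprime_power_right_iff)
  then show ?thesis
    using \<open>i mod 3 = i' mod 3\<close> by (simp add: cong_def mod_mult2_eq)
qed

text \<open>The length bound is invariant under the descent from \<open>n\<close> to \<open>m \<approx> 2n/3\<close>: \<open>n + 5\<close> shrinks by
  at most the factor \<open>2/3\<close>, and \<open>n \<ge> 9\<close> is what the synchronisation step needs.\<close>

lemma scaled_length_descent:
  fixes j n :: nat
  assumes "10 * 3 ^ Suc j \<le> 2 ^ Suc j * (n + 5)"
  obtains m where "9 \<le> n" "3 * m + 3 \<le> 2 * n" "10 * 3 ^ j \<le> 2 ^ j * (m + 5)"
proof -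
  have "3 ^ j * 30 \<le> (3::nat) ^ j * (2 * (n + 5))"
  proof -
    have "(3::nat) ^ j * 30 = 10 * 3 ^ Suc j"
      by simp
    also have "\<dots> \<le> 2 ^ Suc j * (n + 5)"
      by (rule assms)
    also have "\<dots> = 2 ^ j * (2 * (n + 5))"
      by simp
    also have "\<dots> \<le> 3 ^ j * (2 * (n + 5))"
      by (simp add: power_mono)
    finally show ?thesis .
  qed
  then have "10 \<le> n"
    by simp
  then have "\<exists>m. 3 * m + 3 \<le> 2 * n \<and> 2 * (n + 5) \<le> 3 * (m + 5)"
    by presburger
  then obtain m where m: "3 * m + 3 \<le> 2 * n" "2 * (n + 5) \<le> 3 * (m + 5)"
    by blast
  have "3 * (10 * 3 ^ j) \<le> (3::nat) * (2 ^ j * (m + 5))"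
  proof -
    have "3 * (10 * 3 ^ j) = (10::nat) * 3 ^ Suc j"
      by simp
    also have "\<dots> \<le> 2 ^ Suc j * (n + 5)"
      by (rule assms)
    also have "\<dots> = 2 ^ j * (2 * (n + 5))"
      by simp
    also have "\<dots> \<le> 2 ^ j * (3 * (m + 5))"
      using m(2) by simp
    also have "\<dots> = 3 * (2 ^ j * (m + 5))"
      by simp
    finally show ?thesis .
  qed
  then have "10 * 3 ^ j \<le> 2 ^ j * (m + 5)"
    by (simp only: mult_le_cancel1)
  with \<open>10 \<le> n\<close> m(1) show ?thesis
    by (intro that) simp_all
qed

lemma Delta_tm32_window_eq_imp_cong_3:
  assumes "window (Delta tm32) i n = window (Delta tm32) i' n" and "9 \<le> n"
  shows "[i = i'] (mod 3)"
proof (rule ccontr)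
  assume "\<not> [i = i'] (mod 3)"
  then have "\<exists>\<delta><9. ((i + \<delta>) mod 9 = 1 \<or> (i + \<delta>) mod 9 = 5) \<and> 3 dvd i' + \<delta>"
    unfolding cong_def by presburger
  then obtain \<delta> q where "\<delta> < 9" "(i + \<delta>) mod 9 = 1 \<or> (i + \<delta>) mod 9 = 5" "i' + \<delta> = 3 * q"
    by blast
  then have "Delta tm32 (i + \<delta>) = 1" and "Delta tm32 (i' + \<delta>) = 0"
    by (simp_all add: Delta_tm32_eq_1 Delta_tm32_mult_3)
  moreover have "Delta tm32 (i + \<delta>) = Delta tm32 (i' + \<delta>)"
    using assms \<open>\<delta> < 9\<close> by (simp add: window_eq_iff)
  ultimately show False
    by simp
qed

lemma Delta_tm32_window_eq_descent:
  assumes "window (Delta tm32) i n = window (Delta tm32) i' n"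
    and "[i = i'] (mod 3)" and "3 * m + 3 \<le> 2 * n"
  shows "window (Delta tm32) (2 * i div 3) m = window (Delta tm32) (2 * i' div 3) m"
proof -
  have "Delta tm32 (2 * i div 3 + u) = Delta tm32 (2 * i' div 3 + u)" if "u < m" for u
  proof -
    define \<delta> where "\<delta> = (3 * (2 * (i mod 3) div 3 + u) + 2) div 2 - i mod 3"
    have "i mod 3 = i' mod 3"
      using assms(2) by (simp add: cong_def)
    then have lift: "(3 * (2 * i div 3 + u) + 2) div 2 = i + \<delta>"
      "(3 * (2 * i' div 3 + u) + 2) div 2 = i' + \<delta>"
      unfolding \<delta>_def by (metis lift_two_thirds_offset)+
    have "\<delta> < n"
      unfolding \<delta>_def using that assms(3) by (intro lift_two_thirds_offset_less) simp_all
    then have "Delta tm32 (i + \<delta>) = Delta tm32 (i' + \<delta>)"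
      using assms(1) by (simp add: window_eq_iff)
    then show ?thesis
      using Delta_tm32_lift[of "2 * i div 3 + u"] Delta_tm32_lift[of "2 * i' div 3 + u"]
        Delta_less_2[of tm32 "2 * i div 3 + u"] Delta_less_2[of tm32 "2 * i' div 3 + u"]
      unfolding lift by linarith
  qed
  then show ?thesis
    by (simp add: window_eq_iff)
qed

lemma Delta_tm32_window_eq_imp_cong_pow3:
  assumes "window (Delta tm32) i n = window (Delta tm32) i' n" and "10 * 3 ^ j \<le> 2 ^ j * (n + 5)"
  shows "[i = i'] (mod 3 ^ j)"
  using assms
proof (induction j arbitrary: i i' n)
  case 0
  then show ?case
    by (simp add: cong_def)
next
  case (Suc j)
  obtain m where "9 \<le> n" and m: "3 * m + 3 \<le> 2 * n" "10 * 3 ^ j \<le> 2 ^ j * (m + 5)"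
    using Suc.prems(2) by (rule scaled_length_descent)
  have cong3: "[i = i'] (mod 3)"
    using Suc.prems(1) \<open>9 \<le> n\<close> by (rule Delta_tm32_window_eq_imp_cong_3)
  have "window (Delta tm32) (2 * i div 3) m = window (Delta tm32) (2 * i' div 3) m"
    using Suc.prems(1) cong3 m(1) by (rule Delta_tm32_window_eq_descent)
  then have "[2 * i div 3 = 2 * i' div 3] (mod 3 ^ j)"
    using m(2) by (rule Suc.IH)
  with cong3 show ?case
    by (rule cong_pow3_SucI)
qed

lemma three_pow_le_fcomplexity_Delta_tm32:
  assumes "10 * 3 ^ j \<le> 2 ^ j * n"
  shows "3 ^ j \<le> fcomplexity (Delta tm32) n"
proof (rule le_fcomplexity_if_window_eq_imp_cong[OF finite_range_Delta])
  have "10 * 3 ^ j \<le> 2 ^ j * (n + 5)"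
    using assms by (simp add: add_mult_distrib2 trans_le_add1)
  then show "[i = i'] (mod 3 ^ j)" if "window (Delta tm32) i n = window (Delta tm32) i' n" for i i'
    using that Delta_tm32_window_eq_imp_cong_pow3 by blast
qed

lemma three_pow_le_fcomplexity_tm32:
  assumes "10 * 3 ^ j \<le> 2 ^ j * n"
  shows "3 ^ j \<le> fcomplexity tm32 n"
proof (rule le_fcomplexity_if_window_eq_imp_cong[OF finite_range_tm32])
  obtain n' where n: "n = Suc n'"
    using assms by (cases n) auto
  have "10 * 3 ^ j \<le> 2 ^ j * (n' + 5)"
    using assms unfolding n by (simp add: add_mult_distrib2)
  then show "[i = i'] (mod 3 ^ j)" if "window tm32 i n = window tm32 i' n" for i i'
    using that window_Delta_eq Delta_tm32_window_eq_imp_cong_pow3 unfolding n by blast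
qed

section \<open>Upper bound\<close>

text \<open>The factor of length \<open>n\<close> at position \<open>3k + s\<close>, read off via \<open>tm32_rec\<close> from the factor \<open>w\<close>
  at position \<open>2k\<close>.\<close>

definition tm32_expand :: "nat \<Rightarrow> nat \<Rightarrow> nat list \<Rightarrow> nat list" where
  "tm32_expand n s w = map (\<lambda>\<delta>. (w ! ((2 * s + 2 * \<delta>) div 3) + (2 * s + 2 * \<delta>) mod 3) mod 2) [0..<n]"

lemma window_tm32_eq_expand:
  "window tm32 i n = tm32_expand n (i mod 3) (window tm32 (2 * (i div 3)) ((2 * n + 5) div 3))"
  unfolding window_def tm32_expand_def
proof (rule map_cong[OF refl])
  fix \<delta> assume "\<delta> \<in> set [0..<n]"
  define k s where "k = i div 3" and "s = i mod 3"
  have "i = 3 * k + s"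
    unfolding k_def s_def by simp
  then have split: "2 * (i + \<delta>) = (2 * s + 2 * \<delta>) + 3 * (2 * k)"
    by simp
  have "2 * (i + \<delta>) div 3 = 2 * k + (2 * s + 2 * \<delta>) div 3"
    and "2 * (i + \<delta>) mod 3 = (2 * s + 2 * \<delta>) mod 3"
    unfolding split using div_mult_self2[of 3 "2 * s + 2 * \<delta>" "2 * k"]
      mod_mult_self2[of "2 * s + 2 * \<delta>" 3 "2 * k"] by simp_all
  moreover have "(2 * s + 2 * \<delta>) div 3 < (2 * n + 5) div 3"
  proof -
    have "2 * s + 2 * \<delta> \<le> 2 * n + 2"
      using \<open>\<delta> \<in> set [0..<n]\<close> unfolding s_def by simp
    then have "(2 * s + 2 * \<delta>) div 3 \<le> (2 * n + 2) div 3"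
      by (rule div_le_mono)
    then show ?thesis
      by linarith
  qed
  ultimately show "tm32 (i + \<delta>) = (map (\<lambda>j. tm32 (2 * (i div 3) + j)) [0..<(2 * n + 5) div 3]
      ! ((2 * (i mod 3) + 2 * \<delta>) div 3) + (2 * (i mod 3) + 2 * \<delta>) mod 3) mod 2"
    using tm32_rec[of "i + \<delta>"] unfolding k_def s_def by simp
qed

lemma fcomplexity_tm32_le_3_times: "fcomplexity tm32 n \<le> 3 * fcomplexity tm32 ((2 * n + 5) div 3)"
proof -
  define m where "m = (2 * n + 5) div 3"
  have "factors tm32 n \<subseteq> (\<lambda>(s, w). tm32_expand n s w) ` ({..<3} \<times> factors tm32 m)"
  proof
    fix x assume "x \<in> factors tm32 n"
    then obtain i where "x = window tm32 i n"
      by (auto simp: factors_eq_range_window)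
    then have "x = (\<lambda>(s, w). tm32_expand n s w) (i mod 3, window tm32 (2 * (i div 3)) m)"
      using window_tm32_eq_expand[of i n] unfolding m_def by simp
    moreover have "(i mod 3, window tm32 (2 * (i div 3)) m) \<in> {..<3} \<times> factors tm32 m"
      by (simp add: factors_eq_range_window)
    ultimately show "x \<in> (\<lambda>(s, w). tm32_expand n s w) ` ({..<3} \<times> factors tm32 m)"
      by (rule image_eqI)
  qed
  then have "card (factors tm32 n) \<le> card ((\<lambda>(s, w). tm32_expand n s w) ` ({..<3} \<times> factors tm32 m))"
    by (intro card_mono) (simp_all add: finite_factors finite_range_tm32)
  also have "\<dots> \<le> card ({..<3::nat} \<times> factors tm32 m)"
    by (rule card_image_le) (simp add: finite_factors finite_range_tm32)
  also have "\<dots> = 3 * card (factors tm32 m)"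
    by (simp add: card_cartesian_product)
  finally show ?thesis
    unfolding fcomplexity_def m_def .
qed

lemma fcomplexity_tm32_le_three_pow:
  assumes "2 ^ j * (n - 5) \<le> 3 ^ j"
  shows "fcomplexity tm32 n \<le> 64 * 3 ^ j"
  using assms
proof (induction j arbitrary: n)
  case 0
  then have "n \<le> 6"
    by simp
  have "fcomplexity tm32 n \<le> card (range tm32) ^ n"
    by (rule fcomplexity_le_card_range_power[OF finite_range_tm32])
  also have "\<dots> \<le> 2 ^ n"
    by (rule power_mono[OF card_range_tm32]) simp
  also have "\<dots> \<le> 2 ^ 6"
    using \<open>n \<le> 6\<close> by (rule power_increasing) simp
  finally show ?case
    by simp
next
  case (Suc j)
  define m where "m = (2 * n + 5) div 3"
  have "3 * (m - 5) \<le> 2 * (n - 5)"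
    unfolding m_def by simp
  then have "3 * (2 ^ j * (m - 5)) \<le> 2 ^ Suc j * (n - 5)"
    by simp
  also have "\<dots> \<le> 3 * 3 ^ j"
    using Suc.prems by simp
  finally have "2 ^ j * (m - 5) \<le> 3 ^ j"
    by (simp only: mult_le_cancel1)
  then have "fcomplexity tm32 m \<le> 64 * 3 ^ j"
    by (rule Suc.IH)
  then show ?case
    using fcomplexity_tm32_le_3_times[of n] unfolding m_def by simp
qed

lemma fcomplexity_Delta_tm32_le_three_pow:
  assumes "2 ^ j * n \<le> 3 ^ j"
  shows "fcomplexity (Delta tm32) n \<le> 64 * 3 ^ j"
proof -
  have "2 ^ j * (Suc n - 5) \<le> 3 ^ j"
    by (rule le_trans[OF _ assms]) simp
  then have "fcomplexity tm32 (Suc n) \<le> 64 * 3 ^ j"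
    by (rule fcomplexity_tm32_le_three_pow)
  then show ?thesis
    using fcomplexity_Delta_le[OF finite_range_tm32, of n] by simp
qed

theorem corollary16:
  fixes r :: real
  defines "r \<equiv> ln 3 / ln (3/2)"
  shows "(\<exists>C1 C2. C1 > 0 \<and> C2 > 0 \<and> (\<forall>n::nat. n \<ge> 1 \<longrightarrow>
            C1 * real n powr r \<le> real (fcomplexity tm32 n) \<and>
            real (fcomplexity tm32 n) \<le> C2 * real n powr r))
       \<and> (\<exists>C1 C2. C1 > 0 \<and> C2 > 0 \<and> (\<forall>n::nat. n \<ge> 1 \<longrightarrow>
            C1 * real n powr r \<le> real (fcomplexity (Delta tm32) n) \<and>
            real (fcomplexity (Delta tm32) n) \<le> C2 * real n powr r))"
proof -
  have r: "r = log (3/2) 3"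
    unfolding r_def log_def ..
  have tm32: "\<exists>C1 C2. C1 > 0 \<and> C2 > 0 \<and> (\<forall>n\<ge>1.
      C1 * real n powr r \<le> real (fcomplexity tm32 n) \<and> real (fcomplexity tm32 n) \<le> C2 * real n powr r)"
    unfolding r
  proof (rule Theta_powr_log_three_halves[where c = 10 and d = 64])
    show "1 \<le> fcomplexity tm32 n" for n
      using fcomplexity_pos[OF finite_range_tm32] by (simp add: Suc_le_eq)
    show "fcomplexity tm32 n \<le> 64 * 3 ^ j" if "2 ^ j * n \<le> 3 ^ j" for j n
      by (rule fcomplexity_tm32_le_three_pow, rule le_trans[OF _ that]) simp
  qed (simp_all add: three_pow_le_fcomplexity_tm32)
  have Delta_tm32: "\<exists>C1 C2. C1 > 0 \<and> C2 > 0 \<and> (\<forall>n\<ge>1.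
      C1 * real n powr r \<le> real (fcomplexity (Delta tm32) n) \<and>
      real (fcomplexity (Delta tm32) n) \<le> C2 * real n powr r)"
    unfolding r
  proof (rule Theta_powr_log_three_halves[where c = 10 and d = 64])
    show "1 \<le> fcomplexity (Delta tm32) n" for n
      using fcomplexity_pos[OF finite_range_Delta] by (simp add: Suc_le_eq)
  qed (simp_all add: three_pow_le_fcomplexity_Delta_tm32 fcomplexity_Delta_tm32_le_three_pow)
  from tm32 Delta_tm32 show ?thesis
    by blast
qed

end
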